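(* Let $G$ be an $n$-vertex near triangulation that is either $K_4$ (embedded with a triangle as outer cycle and one interior vertex) or $G_6^3$, let $C$ be its outer cycle, and let $v$ be a vertex of $C$ with $d(v)=3$ that has a neighbor in $V(G)\setminus V(C)$. Then there exists an orientation $D$ of $G$ with $\mathrm{diam}(D)=\overrightarrow{\mathrm{diam}}(G)=\frac{n}{2}+1$ such that $\max\{d_D(u,v),d_D(v,u)\}\le \frac{n}{2}$ for all $u\in V(G)$.
   Context: A near triangulation is a plane graph in which every face except possibly the outer face is bounded by a triangle; its outer cycle bounds the outer face. $G_6^3$ is the plane graph on vertices $a,b,c,x,y,z$ with edges $ab,bc,ca,xa,xb,xc,by,cy,yz,bz$, embedded with outer cycle $abzyca$, interior vertex $x$, and inner faces $abx,bcx,cax,bcy,byz$. For a directed graph $D$, $d_D(u,v)$ is the length of a shortest directed path from $u$ to $v$ and $\mathrm{diam}(D)=\max_{u,v}d_D(u,v)$; $\overrightarrow{\mathrm{diam}}(G)$ is the minimum of $\mathrm{diam}(D)$ over strongly connected orientations $D$ of $G$. *)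

theory Defs
  imports Complex_Main
begin

definition neighbors :: "'a set set \<Rightarrow> 'a \<Rightarrow> 'a set" where
  "neighbors E v = {w. {v, w} \<in> E}"

definition degree :: "'a set set \<Rightarrow> 'a \<Rightarrow> nat" where
  "degree E v = card (neighbors E v)"

definition is_orientation :: "'a set set \<Rightarrow> ('a \<times> 'a) set \<Rightarrow> bool" where
  "is_orientation E D \<longleftrightarrow>
     (\<forall>(u, w) \<in> D. {u, w} \<in> E) \<and>
     (\<forall>u w. {u, w} \<in> E \<longrightarrow> ((u, w) \<in> D \<or> (w, u) \<in> D) \<and> \<not> ((u, w) \<in> D \<and> (w, u) \<in> D))"

definition strongly_connected :: "'a set \<Rightarrow> ('a \<times> 'a) set \<Rightarrow> bool" where
  "strongly_connected V D \<longleftrightarrow> (\<forall>u\<in>V. \<forall>w\<in>V. (u, w) \<in> D\<^sup>*)"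

definition ddist :: "('a \<times> 'a) set \<Rightarrow> 'a \<Rightarrow> 'a \<Rightarrow> nat" where
  "ddist D u w = (LEAST k. (u, w) \<in> D ^^ k)"

definition ddiam :: "'a set \<Rightarrow> ('a \<times> 'a) set \<Rightarrow> nat" where
  "ddiam V D = Max {ddist D u w | u w. u \<in> V \<and> w \<in> V}"

definition odiam :: "'a set \<Rightarrow> 'a set set \<Rightarrow> nat" where
  "odiam V E = Min {ddiam V D | D. is_orientation E D \<and> strongly_connected V D}"

datatype vtx = A | B | C | X | Y | Z

definition K4_V :: "vtx set" where "K4_V = {A, B, C, X}"
definition K4_E :: "vtx set set" where
  "K4_E = {{A,B}, {B,C}, {C,A}, {X,A}, {X,B}, {X,C}}"
definition K4_outer :: "vtx set" where "K4_outer = {A, B, C}"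

definition G63_V :: "vtx set" where "G63_V = {A, B, C, X, Y, Z}"
definition G63_E :: "vtx set set" where
  "G63_E = {{A,B}, {B,C}, {C,A}, {X,A}, {X,B}, {X,C}, {B,Y}, {C,Y}, {Y,Z}, {B,Z}}"
definition G63_outer :: "vtx set" where "G63_outer = {A, B, Z, Y, C}"

end

theory Submission
  imports Defs
begin

(* Lower bounds: an orientation of a graph given by an edge list is determined by one direction
   bit per edge, and "every vertex reaches every vertex within k steps" unfolds into a
   propositional formula in these bits. For K4 with k = 2 and for G_6^3 with k = 3 the formula is
   unsatisfiable, so every strong orientation has diameter at least n/2 + 1.
   Upper bounds: two explicit orientations of each graph have diameter n/2 + 1, and between them
   they serve every outer vertex v, i.e. d(u,v) and d(v,u) are at most n/2 for all u. *)

definition reach_within :: "('a \<times> 'a) set \<Rightarrow> nat \<Rightarrow> 'a \<Rightarrow> 'a set" where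
  "reach_within D k u = {w. \<exists>j\<le>k. (u, w) \<in> D ^^ j}"

lemma mem_reach_within_0: "w \<in> reach_within D 0 u \<longleftrightarrow> w = u"
  by (simp add: reach_within_def)

lemma mem_reach_within_Suc:
  "w \<in> reach_within D (Suc k) u \<longleftrightarrow>
     w \<in> reach_within D k u \<or> (\<exists>v. v \<in> reach_within D k u \<and> (v, w) \<in> D)"
proof
  assume "w \<in> reach_within D (Suc k) u"
  then obtain j where j: "j \<le> Suc k" "(u, w) \<in> D ^^ j"
    unfolding reach_within_def by blast
  show "w \<in> reach_within D k u \<or> (\<exists>v. v \<in> reach_within D k u \<and> (v, w) \<in> D)"
  proof (cases "j \<le> k")
    case True
    then show ?thesis
      using j(2) unfolding reach_within_def by blast
  next
    case False
    with j have "(u, w) \<in> D ^^ Suc k"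
      by (simp add: le_Suc_eq)
    then obtain v where "(u, v) \<in> D ^^ k" "(v, w) \<in> D"
      by (rule relpow_Suc_E)
    then show ?thesis
      unfolding reach_within_def by blast
  qed
next
  assume "w \<in> reach_within D k u \<or> (\<exists>v. v \<in> reach_within D k u \<and> (v, w) \<in> D)"
  then show "w \<in> reach_within D (Suc k) u"
  proof
    assume "w \<in> reach_within D k u"
    then show ?thesis
      unfolding reach_within_def using le_SucI by blast
  next
    assume "\<exists>v. v \<in> reach_within D k u \<and> (v, w) \<in> D"
    then obtain v j where "j \<le> k" "(u, v) \<in> D ^^ j" "(v, w) \<in> D"
      unfolding reach_within_def by blast
    then have "Suc j \<le> Suc k" "(u, w) \<in> D ^^ Suc j"
      by (auto intro: relpow_Suc_I)
    then show ?thesis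
      unfolding reach_within_def by blast
  qed
qed

lemma rtrancl_if_mem_reach_within: "w \<in> reach_within D k u \<Longrightarrow> (u, w) \<in> D\<^sup>*"
  by (auto simp: reach_within_def intro: relpow_imp_rtrancl)

(* Reachability is needed: for an unreachable pair, ddist is LEAST of an empty set. *)
lemma ddist_le_iff_mem_reach_within:
  assumes "(u, w) \<in> D\<^sup>*"
  shows "ddist D u w \<le> k \<longleftrightarrow> w \<in> reach_within D k u"
proof
  obtain n where "(u, w) \<in> D ^^ n"
    using assms rtrancl_power by blast
  then have "(u, w) \<in> D ^^ ddist D u w"
    unfolding ddist_def by (rule LeastI)
  then show "ddist D u w \<le> k \<Longrightarrow> w \<in> reach_within D k u"
    by (auto simp: reach_within_def)
next
  show "w \<in> reach_within D k u \<Longrightarrow> ddist D u w \<le> k"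
    unfolding reach_within_def ddist_def by (auto dest: Least_le)
qed

definition reaches_within :: "'a set \<Rightarrow> ('a \<times> 'a) set \<Rightarrow> nat \<Rightarrow> bool" where
  "reaches_within V D k \<longleftrightarrow> (\<forall>u\<in>V. V \<subseteq> reach_within D k u)"

definition ecc_within :: "'a set \<Rightarrow> ('a \<times> 'a) set \<Rightarrow> 'a \<Rightarrow> nat \<Rightarrow> bool" where
  "ecc_within V D v r \<longleftrightarrow> V \<subseteq> reach_within D r v \<and> (\<forall>u\<in>V. v \<in> reach_within D r u)"

lemma strongly_connected_if_reaches_within:
  assumes "reaches_within V D k"
  shows "strongly_connected V D"
  unfolding strongly_connected_def
proof (intro ballI)
  fix u w assume "u \<in> V" "w \<in> V"
  with assms have "w \<in> reach_within D k u"
    unfolding reaches_within_def by blast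
  then show "(u, w) \<in> D\<^sup>*"
    by (rule rtrancl_if_mem_reach_within)
qed

lemma ddiam_le_iff_reaches_within:
  assumes "finite V" "V \<noteq> {}" "strongly_connected V D"
  shows "ddiam V D \<le> k \<longleftrightarrow> reaches_within V D k"
proof -
  have "{ddist D u w |u w. u \<in> V \<and> w \<in> V} = (\<lambda>(u, w). ddist D u w) ` (V \<times> V)"
    by auto
  then have "ddiam V D \<le> k \<longleftrightarrow> (\<forall>u\<in>V. \<forall>w\<in>V. ddist D u w \<le> k)"
    using assms(1,2) by (simp add: ddiam_def)
  also have "\<dots> \<longleftrightarrow> reaches_within V D k"
  proof -
    have "ddist D u w \<le> k \<longleftrightarrow> w \<in> reach_within D k u" if "u \<in> V" "w \<in> V" for u w
    proof -
      have "(u, w) \<in> D\<^sup>*"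
        using assms(3) that unfolding strongly_connected_def by blast
      then show ?thesis
        by (rule ddist_le_iff_mem_reach_within)
    qed
    then show ?thesis
      unfolding reaches_within_def by blast
  qed
  finally show ?thesis .
qed

lemma max_ddist_le_if_ecc_within:
  assumes "ecc_within V D v r" "u \<in> V"
  shows "max (ddist D u v) (ddist D v u) \<le> r"
proof -
  have "v \<in> reach_within D r u" "u \<in> reach_within D r v"
    using assms by (auto simp: ecc_within_def)
  moreover from this have "(u, v) \<in> D\<^sup>*" "(v, u) \<in> D\<^sup>*"
    by (simp_all add: rtrancl_if_mem_reach_within)
  ultimately show ?thesis
    by (simp add: ddist_le_iff_mem_reach_within)
qed

lemma orientation_arc_in_edges: "is_orientation E D \<Longrightarrow> (u, w) \<in> D \<Longrightarrow> {u, w} \<in> E"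
  unfolding is_orientation_def by auto

lemma orientation_one_way: "is_orientation E D \<Longrightarrow> {u, w} \<in> E \<Longrightarrow> (u, w) \<in> D \<longleftrightarrow> (w, u) \<notin> D"
  unfolding is_orientation_def by blast

lemma finite_orientations:
  assumes "finite (\<Union>E)"
  shows "finite {D. is_orientation E D}"
proof (rule finite_subset)
  show "{D. is_orientation E D} \<subseteq> Pow (\<Union>E \<times> \<Union>E)"
    using orientation_arc_in_edges by fast
  show "finite (Pow (\<Union>E \<times> \<Union>E))"
    using assms by simp
qed

lemma odiam_eq_Suc:
  assumes "finite V" "V \<noteq> {}" "finite (\<Union>E)"
    and no_orientation_within_k: "\<And>D'. is_orientation E D' \<Longrightarrow> \<not> reaches_within V D' k"
    and "is_orientation E D" "reaches_within V D (Suc k)"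
  shows "ddiam V D = Suc k" "odiam V E = Suc k"
proof -
  let ?S = "{D'. is_orientation E D' \<and> strongly_connected V D'}"
  have diam_gt: "k < ddiam V D'" if "D' \<in> ?S" for D'
    using that no_orientation_within_k ddiam_le_iff_reaches_within[OF assms(1,2)]
    by (simp add: not_le[symmetric])
  have "D \<in> ?S"
    using assms(5,6) strongly_connected_if_reaches_within by blast
  moreover have "ddiam V D \<le> Suc k"
    using assms(6) ddiam_le_iff_reaches_within[OF assms(1,2)] \<open>D \<in> ?S\<close> by simp
  ultimately show diam: "ddiam V D = Suc k"
    using diam_gt by (simp add: le_antisym Suc_leI)
  show "odiam V E = Suc k"
    unfolding odiam_def
  proof (rule Min_eqI)
    have "finite ?S"
      using finite_orientations[OF assms(3)] by (rule finite_subset[rotated]) blast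
    then show "finite {ddiam V D' |D'. is_orientation E D' \<and> strongly_connected V D'}"
      by (simp add: setcompr_eq_image)
    show "Suc k \<in> {ddiam V D' |D'. is_orientation E D' \<and> strongly_connected V D'}"
      using diam \<open>D \<in> ?S\<close> by (metis (mono_tags, lifting) mem_Collect_eq)
    show "Suc k \<le> y" if "y \<in> {ddiam V D' |D'. is_orientation E D' \<and> strongly_connected V D'}" for y
      using that diam_gt by (auto simp: Suc_le_eq)
  qed
qed

definition orient :: "('a \<times> 'a) list \<Rightarrow> bool list \<Rightarrow> ('a \<times> 'a) set" where
  "orient es bs =
     {(u, w). \<exists>((p, q), b) \<in> set (zip es bs). b \<and> (u, w) = (p, q) \<or> \<not> b \<and> (u, w) = (q, p)}"

lemma orientation_eq_orient:
  assumes "is_orientation ((\<lambda>(p, q). {p, q}) ` set es) D"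
  obtains bs where "length bs = length es" "D = orient es bs"
proof
  let ?bs = "map (\<lambda>a. a \<in> D) es"
  have arc: "\<exists>(p, q) \<in> set es. {u, w} = {p, q}" if "(u, w) \<in> D" for u w
    using orientation_arc_in_edges[OF assms that] by auto
  have one_way: "(p, q) \<in> D \<longleftrightarrow> (q, p) \<notin> D" if "(p, q) \<in> set es" for p q
    using orientation_one_way[OF assms] that by force
  have "orient es ?bs =
      {(u, w). \<exists>(p, q) \<in> set es. (p, q) \<in> D \<and> (u, w) = (p, q) \<or> (p, q) \<notin> D \<and> (u, w) = (q, p)}"
    by (auto simp: orient_def zip_map2 zip_same_conv_map)
  also have "\<dots> = D"
  proof (intro equalityI subrelI)
    fix u w
    assume "(u, w) \<in> {(u, w). \<exists>(p, q) \<in> set es.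
                               (p, q) \<in> D \<and> (u, w) = (p, q) \<or> (p, q) \<notin> D \<and> (u, w) = (q, p)}"
    then obtain p q where pq: "(p, q) \<in> set es"
        "(p, q) \<in> D \<and> (u, w) = (p, q) \<or> (p, q) \<notin> D \<and> (u, w) = (q, p)"
      by blast
    then show "(u, w) \<in> D"
      using one_way[OF pq(1)] by auto
  next
    fix u w
    assume "(u, w) \<in> D"
    moreover obtain p q where pq: "(p, q) \<in> set es" "(u, w) = (p, q) \<or> (u, w) = (q, p)"
      using arc[OF \<open>(u, w) \<in> D\<close>] by (auto simp: doubleton_eq_iff)
    ultimately show "(u, w) \<in> {(u, w). \<exists>(p, q) \<in> set es.
                               (p, q) \<in> D \<and> (u, w) = (p, q) \<or> (p, q) \<notin> D \<and> (u, w) = (q, p)}"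
      using one_way[OF pq(1)] pq by auto
  qed
  finally show "D = orient es ?bs" ..
qed simp

lemma ex_vtx: "(\<exists>x::vtx. P x) \<longleftrightarrow> P A \<or> P B \<or> P C \<or> P X \<or> P Y \<or> P Z"
  by (metis vtx.exhaust)

lemma all_vtx: "(\<forall>x::vtx. P x) \<longleftrightarrow> P A \<and> P B \<and> P C \<and> P X \<and> P Y \<and> P Z"
  by (metis vtx.exhaust)

lemmas reach_within_simps = mem_reach_within_0 mem_reach_within_Suc numeral_eq_Suc ex_vtx

definition K4_arcs :: "(vtx \<times> vtx) list" where
  "K4_arcs = [(A,B), (B,C), (C,A), (X,A), (X,B), (X,C)]"

lemma K4_E_eq_arcs: "K4_E = (\<lambda>(p, q). {p, q}) ` set K4_arcs"
  by (simp add: K4_E_def K4_arcs_def)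

lemma K4_not_reaches_within_2:
  assumes "is_orientation K4_E D"
  shows "\<not> reaches_within K4_V D 2"
proof -
  have "is_orientation ((\<lambda>(p, q). {p, q}) ` set K4_arcs) D"
    using assms by (simp only: K4_E_eq_arcs)
  then obtain bs where bs: "length bs = length K4_arcs" and D: "D = orient K4_arcs bs"
    by (rule orientation_eq_orient)
  obtain b1 b2 b3 b4 b5 b6 where bits: "bs = [b1, b2, b3, b4, b5, b6]"
    using bs by (simp add: K4_arcs_def length_Suc_conv) blast
  show ?thesis
    unfolding D bits reaches_within_def K4_V_def K4_arcs_def orient_def
    by (simp add: reach_within_simps) satx
qed

definition K4_orient_AB :: "(vtx \<times> vtx) set" where
  "K4_orient_AB = {(A,B), (B,C), (C,A), (X,A), (B,X), (X,C)}"

definition K4_orient_BC :: "(vtx \<times> vtx) set" where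
  "K4_orient_BC = {(A,B), (B,C), (C,A), (X,A), (X,B), (C,X)}"

lemma K4_orient_AB:
  "is_orientation K4_E K4_orient_AB" "reaches_within K4_V K4_orient_AB 3"
  "ecc_within K4_V K4_orient_AB A 2" "ecc_within K4_V K4_orient_AB B 2"
  unfolding is_orientation_def reaches_within_def ecc_within_def K4_orient_AB_def K4_E_def K4_V_def
  by (simp_all add: all_vtx doubleton_eq_iff reach_within_simps)

lemma K4_orient_BC:
  "is_orientation K4_E K4_orient_BC" "reaches_within K4_V K4_orient_BC 3"
  "ecc_within K4_V K4_orient_BC B 2" "ecc_within K4_V K4_orient_BC C 2"
  unfolding is_orientation_def reaches_within_def ecc_within_def K4_orient_BC_def K4_E_def K4_V_def
  by (simp_all add: all_vtx doubleton_eq_iff reach_within_simps)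

lemma K4_optimal_orientation:
  assumes "v \<in> K4_outer"
  obtains D where "is_orientation K4_E D" "strongly_connected K4_V D"
    "ddiam K4_V D = 3" "odiam K4_V K4_E = 3" "ecc_within K4_V D v 2"
proof -
  obtain D where D: "is_orientation K4_E D" "reaches_within K4_V D 3" "ecc_within K4_V D v 2"
    using assms K4_orient_AB K4_orient_BC unfolding K4_outer_def by blast
  have "finite K4_V" "K4_V \<noteq> {}" "finite (\<Union>K4_E)"
    by (simp_all add: K4_V_def K4_E_def)
  from odiam_eq_Suc[OF this K4_not_reaches_within_2 D(1)] D
  show thesis
    by (intro that) (simp_all add: numeral_eq_Suc strongly_connected_if_reaches_within)
qed

definition G63_arcs :: "(vtx \<times> vtx) list" where
  "G63_arcs = [(A,B), (B,C), (C,A), (X,A), (X,B), (X,C), (B,Y), (C,Y), (Y,Z), (B,Z)]"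

lemma G63_E_eq_arcs: "G63_E = (\<lambda>(p, q). {p, q}) ` set G63_arcs"
  by (simp add: G63_E_def G63_arcs_def)

lemma G63_not_reaches_within_3:
  assumes "is_orientation G63_E D"
  shows "\<not> reaches_within G63_V D 3"
proof -
  have "is_orientation ((\<lambda>(p, q). {p, q}) ` set G63_arcs) D"
    using assms by (simp only: G63_E_eq_arcs)
  then obtain bs where bs: "length bs = length G63_arcs" and D: "D = orient G63_arcs bs"
    by (rule orientation_eq_orient)
  obtain b1 b2 b3 b4 b5 b6 b7 b8 b9 b10 where bits: "bs = [b1, b2, b3, b4, b5, b6, b7, b8, b9, b10]"
    using bs by (simp add: G63_arcs_def length_Suc_conv) blast
  show ?thesis
    unfolding D bits reaches_within_def G63_V_def G63_arcs_def orient_def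
    by (simp add: reach_within_simps) satx
qed

definition G63_orient_ABY :: "(vtx \<times> vtx) set" where
  "G63_orient_ABY = {(A,B), (B,C), (C,A), (X,A), (X,B), (C,X), (B,Y), (Y,C), (Y,Z), (Z,B)}"

definition G63_orient_BCZ :: "(vtx \<times> vtx) set" where
  "G63_orient_BCZ = {(A,B), (B,C), (C,A), (X,A), (X,B), (C,X), (B,Y), (C,Y), (Y,Z), (Z,B)}"

lemma G63_orient_ABY:
  "is_orientation G63_E G63_orient_ABY" "reaches_within G63_V G63_orient_ABY 4"
  "ecc_within G63_V G63_orient_ABY A 3" "ecc_within G63_V G63_orient_ABY B 3"
  "ecc_within G63_V G63_orient_ABY Y 3"
  unfolding is_orientation_def reaches_within_def ecc_within_def G63_orient_ABY_def G63_E_def G63_V_def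
  by (simp_all add: all_vtx doubleton_eq_iff reach_within_simps)

lemma G63_orient_BCZ:
  "is_orientation G63_E G63_orient_BCZ" "reaches_within G63_V G63_orient_BCZ 4"
  "ecc_within G63_V G63_orient_BCZ B 3" "ecc_within G63_V G63_orient_BCZ C 3"
  "ecc_within G63_V G63_orient_BCZ Z 3"
  unfolding is_orientation_def reaches_within_def ecc_within_def G63_orient_BCZ_def G63_E_def G63_V_def
  by (simp_all add: all_vtx doubleton_eq_iff reach_within_simps)

lemma G63_optimal_orientation:
  assumes "v \<in> G63_outer"
  obtains D where "is_orientation G63_E D" "strongly_connected G63_V D"
    "ddiam G63_V D = 4" "odiam G63_V G63_E = 4" "ecc_within G63_V D v 3"
proof -
  obtain D where D: "is_orientation G63_E D" "reaches_within G63_V D 4" "ecc_within G63_V D v 3"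
    using assms G63_orient_ABY G63_orient_BCZ unfolding G63_outer_def by blast
  have "finite G63_V" "G63_V \<noteq> {}" "finite (\<Union>G63_E)"
    by (simp_all add: G63_V_def G63_E_def)
  from odiam_eq_Suc[OF this G63_not_reaches_within_3 D(1)] D
  show thesis
    by (intro that) (simp_all add: numeral_eq_Suc strongly_connected_if_reaches_within)
qed

theorem lemma2p6:
  fixes V :: "vtx set" and E :: "vtx set set" and Cyc :: "vtx set" and v :: vtx
  assumes "(V, E, Cyc) \<in> {(K4_V, K4_E, K4_outer), (G63_V, G63_E, G63_outer)}"
    and "v \<in> Cyc"
    and "degree E v = 3"
    and "\<exists>w. w \<in> V - Cyc \<and> {v, w} \<in> E"
  shows "\<exists>D. is_orientation E D \<and> strongly_connected V D \<and>
           real (ddiam V D) = real (odiam V E) \<and>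
           real (odiam V E) = real (card V) / 2 + 1 \<and>
           (\<forall>u\<in>V. real (max (ddist D u v) (ddist D v u)) \<le> real (card V) / 2)"
proof -
  consider (K4) "V = K4_V" "E = K4_E" "Cyc = K4_outer" | (G63) "V = G63_V" "E = G63_E" "Cyc = G63_outer"
    using assms(1) by blast
  then show ?thesis
  proof cases
    case K4
    obtain D where "is_orientation K4_E D" "strongly_connected K4_V D"
      "ddiam K4_V D = 3" "odiam K4_V K4_E = 3" "ecc_within K4_V D v 2"
      using K4_optimal_orientation assms(2) K4 by blast
    moreover have "card K4_V = 4" by (simp add: K4_V_def)
    ultimately show ?thesis
      using K4 max_ddist_le_if_ecc_within by (intro exI[of _ D]) fastforce
  next
    case G63
    obtain D where "is_orientation G63_E D" "strongly_connected G63_V D"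
      "ddiam G63_V D = 4" "odiam G63_V G63_E = 4" "ecc_within G63_V D v 3"
      using G63_optimal_orientation assms(2) G63 by blast
    moreover have "card G63_V = 6" by (simp add: G63_V_def)
    ultimately show ?thesis
      using G63 max_ddist_le_if_ecc_within by (intro exI[of _ D]) fastforce
  qed
qed

end
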